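(* The post-processed cell averages of the conserved variables satisfy $$\sum_j\overline{\bm U}_j(t+\Delta t)=\sum_j\overline{\bm U}_j^{\,*}.$$
   Context: Consider a 1-D hyperbolic system of conservation laws $\bm U_t+\bm F(\bm U)_x=\bm 0$, together with an equivalent nonconservative (primitive) formulation in variables $\bm V$. There is an invertible transformation $\bm U(\bm V)$ from primitive to conserved variables, with inverse $\bm V(\bm U)$. The numerical solution lives on two overlapping uniform meshes with spacing $\Delta x$. The first mesh has cells $I_j=[x_{j-\frac12},x_{j+\frac12}]$ and carries cell averages $\overline{\bm U}_j$ of the conserved variables. The second, staggered mesh has cells $I_{j+\frac12}=[x_j,x_{j+1}]$ and carries cell averages $\overline{\bm V}_{j+\frac12}$ of the primitive variables. After one time step from $t$ to $t+\Delta t$ by an ODE solver, denote the evolved values by $\overline{\bm U}_j^{\,*}$ and $\overline{\bm V}_{j+\frac12}^{\,*}$. The post-processing is then defined as follows. (1) Set $\bm U_{j+\frac12}^*:=\bm U(\overline{\bm V}_{j+\frac12}^{\,*})$. (2) Compute the slopes $$(\bm U_x)_j^*=2\,\mathrm{minmod}\Big(\frac{\overline{\bm U}_j^{\,*}-\bm U_{j-\frac12}^*}{\Delta x},\frac{\bm U_{j+\frac12}^*-\overline{\bm U}_j^{\,*}}{\Delta x}\Big),$$ where minmod is applied componentwise. It returns the minimum of its arguments if all are positive, the maximum if all are negative, and $0$ otherwise. Then define $$\bm U_{j+\frac12}^{*,-}:=\overline{\bm U}_j^{\,*}+\frac{\Delta x}{2}(\bm U_x)_j^*,\qquad \bm U_{j+\frac12}^{*,+}:=\overline{\bm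 U}_{j+1}^{\,*}-\frac{\Delta x}{2}(\bm U_x)_{j+1}^*.$$ (3) Set $\bm U_{j+\frac12}^{**}:=\frac12\big(\bm U_{j+\frac12}^{*,-}+\bm U_{j+\frac12}^{*,+}\big)$ and $\overline{\bm V}_{j+\frac12}(t+\Delta t)=\bm V(\bm U_{j+\frac12}^{**})$. (4) Set $\overline{\bm U}_j(t+\Delta t)=\frac12\big(\bm U_{j-\frac12}^{**}+\bm U_{j+\frac12}^{**}\big)$. Sums are over all cells, and it is assumed that there are no contributions from boundary terms (e.g. periodic or compactly supported data). *)

theory Defs
  imports "HOL-Analysis.Analysis"
begin

definition minmod :: "real \<Rightarrow> real \<Rightarrow> real" where
  "minmod a b = (if a > 0 \<and> b > 0 then min a b
                 else if a < 0 \<and> b < 0 then max a b else 0)"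

definition minmod_vec :: "real^'m \<Rightarrow> real^'m \<Rightarrow> real^'m" where
  "minmod_vec a b = (\<chi> i. minmod (a $ i) (b $ i))"

text \<open>Indexing convention: Ubar j is the cell average on I_j; Vbar j is the cell
average on the staggered cell I_{j+1/2}, i.e. Vbar j stands for V_{j+1/2}.
Ufun: primitive -> conserved, Vfun: conserved -> primitive.\<close>

definition U_half :: "(real^'m \<Rightarrow> real^'m) \<Rightarrow> (int \<Rightarrow> real^'m) \<Rightarrow> int \<Rightarrow> real^'m" where
  "U_half Ufun Vbar j = Ufun (Vbar j)"

definition slope :: "real \<Rightarrow> (real^'m \<Rightarrow> real^'m) \<Rightarrow> (int \<Rightarrow> real^'m) \<Rightarrow> (int \<Rightarrow> real^'m)
    \<Rightarrow> int \<Rightarrow> real^'m" where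
  "slope dx Ufun Ubar Vbar j =
     2 *\<^sub>R minmod_vec ((1 / dx) *\<^sub>R (Ubar j - U_half Ufun Vbar (j - 1)))
                      ((1 / dx) *\<^sub>R (U_half Ufun Vbar j - Ubar j))"

definition U_minus :: "real \<Rightarrow> (real^'m \<Rightarrow> real^'m) \<Rightarrow> (int \<Rightarrow> real^'m) \<Rightarrow> (int \<Rightarrow> real^'m)
    \<Rightarrow> int \<Rightarrow> real^'m" where
  "U_minus dx Ufun Ubar Vbar j = Ubar j + (dx / 2) *\<^sub>R slope dx Ufun Ubar Vbar j"

definition U_plus :: "real \<Rightarrow> (real^'m \<Rightarrow> real^'m) \<Rightarrow> (int \<Rightarrow> real^'m) \<Rightarrow> (int \<Rightarrow> real^'m)
    \<Rightarrow> int \<Rightarrow> real^'m" where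
  "U_plus dx Ufun Ubar Vbar j = Ubar (j + 1) - (dx / 2) *\<^sub>R slope dx Ufun Ubar Vbar (j + 1)"

definition U_starstar :: "real \<Rightarrow> (real^'m \<Rightarrow> real^'m) \<Rightarrow> (int \<Rightarrow> real^'m) \<Rightarrow> (int \<Rightarrow> real^'m)
    \<Rightarrow> int \<Rightarrow> real^'m" where
  "U_starstar dx Ufun Ubar Vbar j =
     (1 / 2) *\<^sub>R (U_minus dx Ufun Ubar Vbar j + U_plus dx Ufun Ubar Vbar j)"

definition post_V :: "real \<Rightarrow> (real^'m \<Rightarrow> real^'m) \<Rightarrow> (real^'m \<Rightarrow> real^'m) \<Rightarrow> (int \<Rightarrow> real^'m)
    \<Rightarrow> (int \<Rightarrow> real^'m) \<Rightarrow> int \<Rightarrow> real^'m" where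
  "post_V dx Ufun Vfun Ubar Vbar j = Vfun (U_starstar dx Ufun Ubar Vbar j)"

definition post_U :: "real \<Rightarrow> (real^'m \<Rightarrow> real^'m) \<Rightarrow> (int \<Rightarrow> real^'m) \<Rightarrow> (int \<Rightarrow> real^'m)
    \<Rightarrow> int \<Rightarrow> real^'m" where
  "post_U dx Ufun Ubar Vbar j =
     (1 / 2) *\<^sub>R (U_starstar dx Ufun Ubar Vbar (j - 1) + U_starstar dx Ufun Ubar Vbar j)"

end

theory Submission
  imports Defs
begin

text \<open>
  Both averaging steps are conservative on periodic data. By step (3),
  U** at j+1/2 equals (U_j + U_(j+1))/2 + (dx/4)(s_j - s_(j+1)) with the slopes s;
  summed over a period the slope terms telescope and the two shifted copies of U
  have the same sum, so the sum of U** equals the sum of U. Step (4) averages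
  neighbouring values of U**, which again preserves the sum over a period.
\<close>

lemma sum_periodic_shift:
  fixes f :: "int \<Rightarrow> 'a::comm_monoid_add"
  assumes periodic: "\<And>j. f (j + N) = f j" and "N > 0"
  shows "(\<Sum>j\<in>{0..<N}. f (j + 1)) = (\<Sum>j\<in>{0..<N}. f j)"
proof -
  have "(\<Sum>j\<in>{0..<N}. f (j + 1)) = (\<Sum>j\<in>(\<lambda>j. j + 1) ` {0..<N}. f j)"
    by (subst sum.reindex) (auto simp: inj_on_def)
  also have "(\<lambda>j. j + 1) ` {0..<N} = insert N {1..<N}"
    using \<open>N > 0\<close> by (auto simp: image_iff intro!: bexI[where x = "_ - 1"])
  also have "(\<Sum>j\<in>insert N {1..<N}. f j) = f 0 + (\<Sum>j\<in>{1..<N}. f j)"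
    using periodic[of 0] by simp
  also have "\<dots> = (\<Sum>j\<in>insert 0 {1..<N}. f j)"
    by simp
  also have "insert 0 {1..<N} = {0..<N}"
    using \<open>N > 0\<close> by auto
  finally show ?thesis .
qed

lemma sum_periodic_shift_left:
  fixes f :: "int \<Rightarrow> 'a::comm_monoid_add"
  assumes "\<And>j. f (j + N) = f j" and "N > 0"
  shows "(\<Sum>j\<in>{0..<N}. f (j - 1)) = (\<Sum>j\<in>{0..<N}. f j)"
proof -
  have "(\<Sum>j\<in>{0..<N}. f (j + 1 - 1)) = (\<Sum>j\<in>{0..<N}. f (j - 1))"
  proof (rule sum_periodic_shift[where f = "\<lambda>j. f (j - 1)"])
    show "f (j + N - 1) = f (j - 1)" for j
      using assms(1)[of "j - 1"] by (simp add: algebra_simps)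
  qed (fact \<open>N > 0\<close>)
  then show ?thesis
    by simp
qed

lemma sum_periodic_midpoint:
  fixes f :: "int \<Rightarrow> 'a::real_vector"
  assumes "\<And>j. f (j + N) = f j" and "N > 0"
  shows "(\<Sum>j\<in>{0..<N}. (1 / 2) *\<^sub>R (f j + f (j + 1))) = (\<Sum>j\<in>{0..<N}. f j)"
  using sum_periodic_shift[of f N, OF assms]
  by (simp add: scaleR_sum_right[symmetric] sum.distrib scaleR_2[symmetric])

lemma sum_periodic_difference:
  fixes f :: "int \<Rightarrow> 'a::ab_group_add"
  assumes "\<And>j. f (j + N) = f j" and "N > 0"
  shows "(\<Sum>j\<in>{0..<N}. f j - f (j + 1)) = 0"
  using sum_periodic_shift[of f N, OF assms] by (simp add: sum_subtractf)

lemma slope_periodic: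
  assumes "\<And>j. Ubar (j + N) = Ubar j" and "\<And>j. Vbar (j + N) = Vbar j"
  shows "slope dx Ufun Ubar Vbar (j + N) = slope dx Ufun Ubar Vbar j"
proof -
  have "Vbar (j + N - 1) = Vbar (j - 1)"
    using assms(2)[of "j - 1"] by (simp add: algebra_simps)
  then show ?thesis
    unfolding slope_def U_half_def by (simp only: assms)
qed

lemma U_starstar_eq:
  "U_starstar dx Ufun Ubar Vbar j =
     (1 / 2) *\<^sub>R (Ubar j + Ubar (j + 1)) +
     (dx / 4) *\<^sub>R (slope dx Ufun Ubar Vbar j - slope dx Ufun Ubar Vbar (j + 1))"
  unfolding U_starstar_def U_minus_def U_plus_def by (simp add: algebra_simps)

lemma U_starstar_periodic:
  assumes "\<And>j. Ubar (j + N) = Ubar j" and "\<And>j. Vbar (j + N) = Vbar j"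
  shows "U_starstar dx Ufun Ubar Vbar (j + N) = U_starstar dx Ufun Ubar Vbar j"
proof -
  have "Ubar (j + N + 1) = Ubar (j + 1)"
    using assms(1)[of "j + 1"] by (simp add: algebra_simps)
  moreover have "slope dx Ufun Ubar Vbar (j + N + 1) = slope dx Ufun Ubar Vbar (j + 1)"
    using slope_periodic[of Ubar N Vbar dx Ufun "j + 1", OF assms] by (simp add: algebra_simps)
  ultimately show ?thesis
    unfolding U_starstar_eq by (simp add: assms slope_periodic[of Ubar N Vbar, OF assms])
qed

lemma sum_U_starstar:
  assumes "\<And>j. Ubar (j + N) = Ubar j" and "\<And>j. Vbar (j + N) = Vbar j" and "N > 0"
  shows "(\<Sum>j\<in>{0..<N}. U_starstar dx Ufun Ubar Vbar j) = (\<Sum>j\<in>{0..<N}. Ubar j)"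
proof -
  let ?s = "slope dx Ufun Ubar Vbar"
  have "(\<Sum>j\<in>{0..<N}. U_starstar dx Ufun Ubar Vbar j) =
      (\<Sum>j\<in>{0..<N}. (1 / 2) *\<^sub>R (Ubar j + Ubar (j + 1))) +
      (dx / 4) *\<^sub>R (\<Sum>j\<in>{0..<N}. ?s j - ?s (j + 1))"
    unfolding U_starstar_eq by (simp add: sum.distrib scaleR_sum_right)
  also have "\<dots> = (\<Sum>j\<in>{0..<N}. Ubar j)"
    using sum_periodic_midpoint[of Ubar N, OF assms(1,3)]
      sum_periodic_difference[of ?s N, OF slope_periodic[of Ubar N Vbar, OF assms(1,2)] assms(3)]
    by simp
  finally show ?thesis .
qed

lemma sum_post_U:
  assumes "\<And>j. Ubar (j + N) = Ubar j" and "\<And>j. Vbar (j + N) = Vbar j" and "N > 0"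
  shows "(\<Sum>j\<in>{0..<N}. post_U dx Ufun Ubar Vbar j) =
    (\<Sum>j\<in>{0..<N}. U_starstar dx Ufun Ubar Vbar j)"
proof -
  let ?W = "U_starstar dx Ufun Ubar Vbar"
  have "(\<Sum>j\<in>{0..<N}. post_U dx Ufun Ubar Vbar j) =
      (1 / 2) *\<^sub>R ((\<Sum>j\<in>{0..<N}. ?W (j - 1)) + (\<Sum>j\<in>{0..<N}. ?W j))"
    unfolding post_U_def by (simp add: scaleR_sum_right[symmetric] sum.distrib)
  also have "(\<Sum>j\<in>{0..<N}. ?W (j - 1)) = (\<Sum>j\<in>{0..<N}. ?W j)"
    using sum_periodic_shift_left[of ?W N, OF U_starstar_periodic[of Ubar N Vbar, OF assms(1,2)] assms(3)] .
  finally show ?thesis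
    by (simp add: scaleR_2[symmetric])
qed

theorem mainTheorem1:
  fixes Ubar Vbar :: "int \<Rightarrow> real^'m"
    and Ufun Vfun :: "real^'m \<Rightarrow> real^'m"
    and dx :: real and N :: int
  assumes "dx > 0" and "N > 0"
    and "\<And>v. Vfun (Ufun v) = v" and "\<And>u. Ufun (Vfun u) = u"
    and "\<And>j. Ubar (j + N) = Ubar j" and "\<And>j. Vbar (j + N) = Vbar j"
  shows "(\<Sum>j\<in>{0..<N}. post_U dx Ufun Ubar Vbar j) = (\<Sum>j\<in>{0..<N}. Ubar j)"
  using sum_post_U[of Ubar N Vbar] sum_U_starstar[of Ubar N Vbar] assms(2,5,6) by simp

end
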